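(* Let $X$ be a real Banach space with $\dim X\ge 2$. (i) If $S_P(X)=\tfrac12$, then $X$ is not uniformly convex. (ii) If $S_P(X)=\tfrac12$ and $X$ is finite-dimensional, then $X$ is not strictly convex.
   Context: For a real Banach space $X$ with unit sphere $S_X$, the P-angle constant is $S_P(X)=\sup\left\{\frac{\|x+y\|^2+\|x-y\|^2-4}{2\|x+y\|\,\|x-y\|}: x,y\in S_X,\ x\neq \pm y\right\}$. $X$ is uniformly convex if for every $\varepsilon\in(0,2]$ there is $\delta>0$ such that $x,y\in S_X$ and $\|x-y\|\ge\varepsilon$ imply $\frac{\|x+y\|}{2}\le 1-\delta$. $X$ is strictly convex if $x,y\in S_X$, $x\ne y$ imply $\|x+y\|<2$. *)

theory Defs
  imports "HOL-Analysis.Analysis"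
begin

definition unit_sphere :: "'a::real_normed_vector set" where
  "unit_sphere = {x. norm x = 1}"

definition P_angle_const :: "'a::real_normed_vector itself \<Rightarrow> real" where
  "P_angle_const _ = Sup {((norm (x + y))\<^sup>2 + (norm (x - y))\<^sup>2 - 4) / (2 * norm (x + y) * norm (x - y)) | x y :: 'a.
      x \<in> unit_sphere \<and> y \<in> unit_sphere \<and> x \<noteq> y \<and> x \<noteq> - y}"

definition uniformly_convex_space :: "'a::real_normed_vector itself \<Rightarrow> bool" where
  "uniformly_convex_space _ \<longleftrightarrow>
     (\<forall>\<epsilon>. 0 < \<epsilon> \<and> \<epsilon> \<le> 2 \<longrightarrow> (\<exists>\<delta>>0. \<forall>x y :: 'a. x \<in> unit_sphere \<and> y \<in> unit_sphere \<and> norm (x - y) \<ge> \<epsilon>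
        \<longrightarrow> norm (x + y) / 2 \<le> 1 - \<delta>))"

definition strictly_convex_space :: "'a::real_normed_vector itself \<Rightarrow> bool" where
  "strictly_convex_space _ \<longleftrightarrow>
     (\<forall>x y :: 'a. x \<in> unit_sphere \<and> y \<in> unit_sphere \<and> x \<noteq> y \<longrightarrow> norm (x + y) < 2)"

definition dim_ge_2 :: "'a::real_vector itself \<Rightarrow> bool" where
  "dim_ge_2 _ \<longleftrightarrow> (\<exists>u v :: 'a. u \<noteq> v \<and> independent {u, v})"

definition finite_dim_space :: "'a::real_vector itself \<Rightarrow> bool" where
  "finite_dim_space _ \<longleftrightarrow> (\<exists>B :: 'a set. finite B \<and> span B = UNIV)"

end

theory Submission
  imports Defs
begin

text \<open>If \<open>S\<^sub>P(X) = 1/2\<close>, then, since the quotient in its definition never exceeds \<open>1/2\<close>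
  and comes close to it only when both \<open>\<parallel>x + y\<parallel>\<close> and \<open>\<parallel>x - y\<parallel>\<close> are close to \<open>2\<close>, the unit
  sphere contains pairs with \<open>\<parallel>x + y\<parallel>\<close> and \<open>\<parallel>x - y\<parallel>\<close> simultaneously arbitrarily close to \<open>2\<close>:
  \<open>X\<close> is not uniformly non-square. Uniform convexity (applied with \<open>\<epsilon> = 1\<close>) excludes such
  pairs. In finite dimensions the unit sphere is compact, so a limit pair would satisfy
  \<open>\<parallel>x + y\<parallel> = \<parallel>x - y\<parallel> = 2\<close>, which strict convexity excludes.\<close>

lemma closed_if_bounded_sequences_have_convergent_subsequences:
  fixes S :: "'a::real_normed_vector set"
  assumes "\<And>s :: nat \<Rightarrow> 'a. (\<And>n. s n \<in> S) \<Longrightarrow> bounded (range s) \<Longrightarrow>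
             \<exists>r l. strict_mono r \<and> l \<in> S \<and> (s \<circ> r) \<longlonglongrightarrow> l"
  shows "closed S"
  unfolding closed_sequential_limits
proof (intro allI impI, elim conjE)
  fix s l assume s: "\<forall>n. s n \<in> S" "s \<longlonglongrightarrow> l"
  have "bounded (range s)" using s(2) by (rule convergent_imp_bounded)
  then obtain r l' where r: "strict_mono r" "l' \<in> S" "(s \<circ> r) \<longlonglongrightarrow> l'"
    using assms s(1) by blast
  have "(s \<circ> r) \<longlonglongrightarrow> l" using LIMSEQ_subseq_LIMSEQ[OF s(2) r(1)] .
  then show "l \<in> S" using r(2,3) LIMSEQ_unique by metis
qed

text \<open>If the coefficients were unbounded, then along indices with \<open>\<bar>c n\<bar> \<rightarrow> \<infinity>\<close> the vectors
  \<open>(s n - c n b) / c n \<in> V\<close> would converge to \<open>-b\<close>.\<close>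

lemma bounded_coefficients_off_closed_subspace:
  fixes V :: "'a::real_normed_vector set"
  assumes "closed V" "subspace V" "b \<notin> V" "bounded (range s)"
    and "\<And>n. s n - c n *\<^sub>R b \<in> V"
  shows "bounded (range c)"
proof (rule ccontr)
  assume "\<not> bounded (range c)"
  then have "\<forall>k. \<exists>n. real (Suc k) \<le> \<bar>c n\<bar>"
    by (metis bounded_real linorder_not_le order_less_imp_le rangeE)
  then obtain m where m: "\<And>k. real (Suc k) \<le> \<bar>c (m k)\<bar>" by metis
  obtain M where M: "\<And>n. norm (s n) \<le> M" using assms(4) by (auto simp: bounded_iff)
  then have "0 \<le> M" using norm_ge_zero order_trans by blast
  have "(\<lambda>k. s (m k) /\<^sub>R c (m k)) \<longlonglongrightarrow> 0"
  proof (rule Lim_null_comparison)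
    show "\<forall>\<^sub>F k in sequentially. norm (s (m k) /\<^sub>R c (m k)) \<le> M * inverse (real (Suc k))"
    proof (intro always_eventually allI)
      fix k
      have "inverse \<bar>c (m k)\<bar> \<le> inverse (real (Suc k))"
        using m[of k] by (intro le_imp_inverse_le) auto
      then have "norm (s (m k)) * inverse \<bar>c (m k)\<bar> \<le> M * inverse (real (Suc k))"
        using M[of "m k"] \<open>0 \<le> M\<close> by (intro mult_mono) auto
      then show "norm (s (m k) /\<^sub>R c (m k)) \<le> M * inverse (real (Suc k))"
        by (simp add: divide_inverse ac_simps)
    qed
    show "(\<lambda>k. M * inverse (real (Suc k))) \<longlonglongrightarrow> 0"
      using tendsto_mult_right_zero[OF LIMSEQ_inverse_real_of_nat] .
  qed
  then have "(\<lambda>k. s (m k) /\<^sub>R c (m k) - b) \<longlonglongrightarrow> 0 - b"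
    by (intro tendsto_diff tendsto_const)
  moreover have "s (m k) /\<^sub>R c (m k) - b = (s (m k) - c (m k) *\<^sub>R b) /\<^sub>R c (m k)" for k
    using m[of k] by (auto simp: algebra_simps)
  moreover have "(s (m k) - c (m k) *\<^sub>R b) /\<^sub>R c (m k) \<in> V" for k
    using assms(2,5) by (rule subspace_scale)
  ultimately have "- b \<in> V" using closed_sequentially[OF assms(1)] by fastforce
  then show False using assms(2,3) subspace_neg by fastforce
qed

lemma bounded_sequence_in_finite_span_has_convergent_subsequence:
  fixes B :: "'a::real_normed_vector set" and s :: "nat \<Rightarrow> 'a"
  assumes "finite B" "\<And>n. s n \<in> span B" "bounded (range s)"
  shows "\<exists>r l. strict_mono r \<and> l \<in> span B \<and> (s \<circ> r) \<longlonglongrightarrow> l"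
  using assms
proof (induction B arbitrary: s rule: finite_induct)
  case empty
  then have "s = (\<lambda>n. 0)" by auto
  then have "strict_mono id \<and> 0 \<in> span {} \<and> (s \<circ> id) \<longlonglongrightarrow> 0"
    by (simp add: strict_mono_id span_zero)
  then show ?case by blast
next
  case (insert b B)
  show ?case
  proof (cases "b \<in> span B")
    case True
    then have "span (insert b B) = span B" by (rule span_redundant)
    then show ?thesis using insert.IH insert.prems by simp
  next
    case False
    have closed: "closed (span B)"
      using insert.IH by (rule closed_if_bounded_sequences_have_convergent_subsequences)
    have "\<forall>n. \<exists>k. s n - k *\<^sub>R b \<in> span B"
      using insert.prems(1) unfolding span_insert by blast
    then obtain c where c: "\<And>n. s n - c n *\<^sub>R b \<in> span B" by metis
    define t where "t n = s n - c n *\<^sub>R b" for n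
    have c_bounded: "bounded (range c)"
      using bounded_coefficients_off_closed_subspace[OF closed subspace_span False insert.prems(2) c] .
    then obtain r1 \<gamma> where r1: "strict_mono r1" "(c \<circ> r1) \<longlonglongrightarrow> \<gamma>"
      using bounded_imp_convergent_subsequence by blast
    have "bounded (range (\<lambda>n. c n *\<^sub>R b))"
      using bounded_linear_image[OF c_bounded bounded_linear_scaleR_left, of b]
      by (simp add: image_image)
    then have "bounded (range t)"
      unfolding t_def using insert.prems(2) by (rule bounded_minus_comp[rotated])
    then have "bounded (range (t \<circ> r1))"
      by (rule bounded_subset) auto
    moreover have "(t \<circ> r1) n \<in> span B" for n using c by (simp add: t_def)
    ultimately obtain r2 w where r2: "strict_mono r2" "w \<in> span B" "(t \<circ> r1 \<circ> r2) \<longlonglongrightarrow> w"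
      using insert.IH by blast
    have "(\<lambda>n. t (r1 (r2 n)) + c (r1 (r2 n)) *\<^sub>R b) \<longlonglongrightarrow> w + \<gamma> *\<^sub>R b"
      using r2(3) LIMSEQ_subseq_LIMSEQ[OF r1(2) r2(1)]
      by (intro tendsto_add tendsto_scaleR tendsto_const) (auto simp: o_def)
    then have "(s \<circ> (r1 \<circ> r2)) \<longlonglongrightarrow> w + \<gamma> *\<^sub>R b" by (simp add: t_def o_def)
    moreover have "w + \<gamma> *\<^sub>R b \<in> span (insert b B)"
      unfolding span_insert using r2(2) by (intro CollectI exI[of _ \<gamma>]) simp
    ultimately show ?thesis using strict_mono_o[OF r1(1) r2(1)] by blast
  qed
qed

lemma compact_unit_sphere:
  assumes "finite_dim_space TYPE('a::real_normed_vector)"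
  shows "compact (unit_sphere :: 'a set)"
  unfolding compact_eq_seq_compact_metric
proof (rule seq_compactI)
  fix s :: "nat \<Rightarrow> 'a" assume s: "\<forall>n. s n \<in> unit_sphere"
  obtain B :: "'a set" where B: "finite B" "span B = UNIV"
    using assms by (auto simp: finite_dim_space_def)
  have "bounded (range s)" using s by (auto simp: bounded_iff unit_sphere_def)
  then obtain r l where r: "strict_mono r" "(s \<circ> r) \<longlonglongrightarrow> l"
    using bounded_sequence_in_finite_span_has_convergent_subsequence[OF B(1)] B(2) by blast
  have "closed (unit_sphere :: 'a set)"
    unfolding unit_sphere_def by (intro closed_Collect_eq continuous_intros)
  moreover have "(s \<circ> r) n \<in> unit_sphere" for n using s by simp
  ultimately have "l \<in> unit_sphere" using r(2) by (rule closed_sequentially)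
  then show "\<exists>l\<in>unit_sphere. \<exists>r. strict_mono r \<and> (s \<circ> r) \<longlonglongrightarrow> l" using r by blast
qed

lemma norm_add_diff_le_2_on_unit_sphere:
  assumes "x \<in> unit_sphere" "y \<in> unit_sphere"
  shows "norm (x + y) \<le> 2" "norm (x - y) \<le> 2"
  using assms norm_triangle_ineq[of x y] norm_triangle_ineq4[of x y]
  by (auto simp: unit_sphere_def)

definition uniformly_non_square :: "'a::real_normed_vector itself \<Rightarrow> bool" where
  "uniformly_non_square _ \<longleftrightarrow>
     (\<exists>\<delta>>0. \<forall>x y :: 'a. x \<in> unit_sphere \<and> y \<in> unit_sphere \<longrightarrow>
        min (norm (x + y)) (norm (x - y)) \<le> 2 - \<delta>)"

lemma uniformly_convex_imp_uniformly_non_square: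
  assumes "uniformly_convex_space TYPE('a::real_normed_vector)"
  shows "uniformly_non_square TYPE('a)"
proof -
  obtain \<delta> where \<delta>: "\<delta> > 0" and uc: "\<And>x y :: 'a. x \<in> unit_sphere \<Longrightarrow> y \<in> unit_sphere \<Longrightarrow>
      1 \<le> norm (x - y) \<Longrightarrow> norm (x + y) / 2 \<le> 1 - \<delta>"
    using assms unfolding uniformly_convex_space_def by (metis order.refl one_le_numeral zero_less_one)
  have "min (norm (x + y)) (norm (x - y)) \<le> 2 - min \<delta> 1"
    if "x \<in> unit_sphere" "y \<in> unit_sphere" for x y :: 'a
  proof (cases "1 \<le> norm (x - y)")
    case True
    then have "norm (x + y) \<le> 2 - 2 * \<delta>" using uc[OF that] by simp
    then have "norm (x + y) \<le> 2 - min \<delta> 1" using \<delta> min.cobounded1[of \<delta> 1] by linarith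
    then show ?thesis by (simp add: min_le_iff_disj)
  next
    case False
    then have "norm (x - y) \<le> 2 - min \<delta> 1" using min.cobounded2[of \<delta> 1] by linarith
    then show ?thesis by (simp add: min_le_iff_disj)
  qed
  then show ?thesis using \<delta> unfolding uniformly_non_square_def
    by (intro exI[of _ "min \<delta> 1"]) auto
qed

lemma finite_dim_strictly_convex_imp_uniformly_non_square:
  assumes "finite_dim_space TYPE('a::real_normed_vector)" "strictly_convex_space TYPE('a)"
  shows "uniformly_non_square TYPE('a)"
proof (cases "unit_sphere = ({} :: 'a set)")
  case True
  then show ?thesis by (auto simp: uniformly_non_square_def intro: exI[of _ 1])
next
  case False
  define f where "f p = min (norm (fst p + snd p)) (norm (fst p - snd p))" for p :: "'a \<times> 'a"
  have "compact (unit_sphere :: 'a set)" using assms(1) by (rule compact_unit_sphere)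
  then have "compact (unit_sphere \<times> unit_sphere :: ('a \<times> 'a) set)" by (intro compact_Times)
  moreover have "unit_sphere \<times> unit_sphere \<noteq> ({} :: ('a \<times> 'a) set)" using False by simp
  moreover have "continuous_on (unit_sphere \<times> unit_sphere) f"
    unfolding f_def by (intro continuous_intros)
  ultimately obtain p where p: "p \<in> unit_sphere \<times> unit_sphere"
    and p_max: "\<And>q. q \<in> unit_sphere \<times> unit_sphere \<Longrightarrow> f q \<le> f p"
    by (metis continuous_attains_sup)
  have "f p < 2"
  proof (rule ccontr)
    obtain x y where xy: "p = (x, y)" "x \<in> unit_sphere" "y \<in> unit_sphere" using p by auto
    assume "\<not> f p < 2"
    then have "2 \<le> norm (x + y)" "2 \<le> norm (x - y)" by (auto simp: f_def xy(1))
    moreover from this(2) have "x \<noteq> y" by auto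
    ultimately show False
      using assms(2) xy(2,3) unfolding strictly_convex_space_def by fastforce
  qed
  moreover have "min (norm (x + y)) (norm (x - y)) \<le> 2 - (2 - f p)"
    if "x \<in> unit_sphere" "y \<in> unit_sphere" for x y :: 'a
    using p_max[of "(x, y)"] that by (simp add: f_def)
  ultimately show ?thesis unfolding uniformly_non_square_def
    by (intro exI[of _ "2 - f p"]) auto
qed

lemma angle_quotient_le_half:
  fixes a b :: real
  assumes "0 < a" "a \<le> 2" "0 < b" "b \<le> 2"
  shows "(a\<^sup>2 + b\<^sup>2 - 4) / (2 * a * b) \<le> 1/2"
proof -
  have "a\<^sup>2 \<le> 4" "b\<^sup>2 \<le> 4"
    using assms power_mono[of a 2 2] power_mono[of b 2 2] by auto
  moreover have "min a b * (min a b - max a b) \<le> 0"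
    using assms by (intro mult_nonneg_nonpos) auto
  ultimately have "a\<^sup>2 + b\<^sup>2 - 4 \<le> a * b"
    by (cases "a \<le> b") (auto simp: power2_eq_square algebra_simps)
  then show ?thesis using assms by (simp add: divide_simps)
qed

lemma lt_of_sum_squares_minus_4_gt:
  fixes a b c :: real
  assumes "0 < a" "0 < b" "b \<le> 2" "c * (a * b) < a\<^sup>2 + b\<^sup>2 - 4"
  shows "c * b < a"
proof -
  have "b\<^sup>2 \<le> 4" using assms power_mono[of b 2 2] by auto
  then have "a * (c * b) < a * a" using assms(4) by (simp add: power2_eq_square algebra_simps)
  then show ?thesis using assms(1) by simp
qed

text \<open>With \<open>c = 1 - 2\<eta>\<close>: from \<open>a\<^sup>2 + b\<^sup>2 - 4 > c a b\<close> one gets \<open>c b < a\<close>, so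
  \<open>b - c a \<le> (1 - c\<^sup>2) b \<le> 4\<eta> b\<close> and \<open>a\<^sup>2 > 4 - b (b - c a) \<ge> 4 - 16\<eta>\<close>.\<close>

lemma ge_2_minus_of_angle_quotient_gt:
  fixes a b \<eta> :: real
  assumes "0 < a" "a \<le> 2" "0 < b" "b \<le> 2" "0 \<le> \<eta>"
    and "1/2 - \<eta> < (a\<^sup>2 + b\<^sup>2 - 4) / (2 * a * b)"
  shows "2 - 8 * \<eta> \<le> a"
proof (cases "\<eta> \<le> 1/2")
  case True
  define c where "c = 1 - 2 * \<eta>"
  have c: "0 \<le> c" "c \<le> 1" using True assms(5) by (auto simp: c_def)
  have gt: "c * (a * b) < a\<^sup>2 + b\<^sup>2 - 4"
  proof -
    have "(1/2 - \<eta>) * (2 * a * b) < a\<^sup>2 + b\<^sup>2 - 4"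
      using assms by (simp add: less_divide_eq)
    then show ?thesis by (simp add: c_def algebra_simps)
  qed
  have "c * b < a"
    using lt_of_sum_squares_minus_4_gt[of a b c] gt assms by simp
  then have "c * (c * b) \<le> c * a" using c by (intro mult_left_mono) auto
  moreover have "(1 - c * c) * b \<le> 4 * \<eta> * b"
    using assms(3,5) by (intro mult_right_mono) (auto simp: c_def algebra_simps)
  ultimately have "b - c * a \<le> 4 * \<eta> * b" by (simp add: algebra_simps)
  then have "b * (b - c * a) \<le> b * (4 * \<eta> * b)" using assms(3) by (intro mult_left_mono) auto
  moreover have "\<eta> * b\<^sup>2 \<le> \<eta> * 4"
    using assms power_mono[of b 2 2] by (intro mult_left_mono) auto
  ultimately have "a\<^sup>2 > 4 - 16 * \<eta>"
    using gt by (simp add: power2_eq_square algebra_simps)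
  moreover have "a * a \<le> 2 * a" \<comment> \<open>hence \<open>a \<ge> a\<^sup>2 / 2 > 2 - 8\<eta>\<close>\<close>
    using assms by (intro mult_right_mono) auto
  ultimately show ?thesis by (simp add: power2_eq_square)
next
  case False
  then show ?thesis using assms by linarith
qed

lemma dim_ge_2_imp_unit_sphere_pair:
  assumes "dim_ge_2 TYPE('a)"
  obtains x y :: "'a::real_normed_vector"
  where "x \<in> unit_sphere" "y \<in> unit_sphere" "x \<noteq> y" "x \<noteq> - y"
proof -
  obtain u v :: 'a where "u \<noteq> v" "independent {u, v}"
    using assms by (auto simp: dim_ge_2_def)
  then have u: "u \<notin> span {v}" and "independent {v}"
    by (auto simp: independent_insert)
  then have "v \<noteq> 0" "u \<noteq> 0" using dependent_zero span_zero by blast+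
  define x where "x = u /\<^sub>R norm u"
  define y where "y = v /\<^sub>R norm v"
  have not_multiple: "x \<noteq> c *\<^sub>R y" for c
  proof
    assume "x = c *\<^sub>R y"
    have "u = norm u *\<^sub>R x" using \<open>u \<noteq> 0\<close> by (simp add: x_def)
    also have "\<dots> = (norm u * c / norm v) *\<^sub>R v"
      by (simp add: \<open>x = c *\<^sub>R y\<close> y_def divide_inverse)
    finally show False using u by (metis span_base span_mul singletonI)
  qed
  show ?thesis
  proof
    show "x \<in> unit_sphere" "y \<in> unit_sphere"
      using \<open>u \<noteq> 0\<close> \<open>v \<noteq> 0\<close> by (auto simp: x_def y_def unit_sphere_def)
    show "x \<noteq> y" "x \<noteq> - y" using not_multiple[of 1] not_multiple[of "- 1"] by auto
  qed
qed

lemma P_angle_const_half_imp_not_uniformly_non_square: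
  assumes "dim_ge_2 TYPE('a::real_normed_vector)" "P_angle_const TYPE('a) = 1/2"
  shows "\<not> uniformly_non_square TYPE('a)"
proof
  define F where "F x y = ((norm (x + y))\<^sup>2 + (norm (x - y))\<^sup>2 - 4) / (2 * norm (x + y) * norm (x - y))"
    for x y :: 'a
  define S where "S = {F x y | x y. x \<in> unit_sphere \<and> y \<in> unit_sphere \<and> x \<noteq> y \<and> x \<noteq> - y}"
  have sup: "Sup S = 1/2" using assms(2) by (simp add: P_angle_const_def S_def F_def)
  have norms: "0 < norm (x + y)" "norm (x + y) \<le> 2" "0 < norm (x - y)" "norm (x - y) \<le> 2"
    if "x \<in> unit_sphere" "y \<in> unit_sphere" "x \<noteq> y" "x \<noteq> - y" for x y :: 'a
    using that norm_add_diff_le_2_on_unit_sphere[of x y] by (auto simp: add_eq_0_iff2)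
  obtain x0 y0 :: 'a where "x0 \<in> unit_sphere" "y0 \<in> unit_sphere" "x0 \<noteq> y0" "x0 \<noteq> - y0"
    using assms(1) by (rule dim_ge_2_imp_unit_sphere_pair)
  then have nonempty: "S \<noteq> {}" unfolding S_def by blast
  have bdd: "bdd_above S"
  proof (rule bdd_aboveI)
    fix z assume "z \<in> S"
    then obtain x y where "x \<in> unit_sphere" "y \<in> unit_sphere" "x \<noteq> y" "x \<noteq> - y" "z = F x y"
      unfolding S_def by blast
    then show "z \<le> 1/2" using norms angle_quotient_le_half by (simp add: F_def)
  qed
  assume "uniformly_non_square TYPE('a)"
  then obtain \<delta> where \<delta>: "0 < \<delta>"
    and uns: "\<And>x y :: 'a. x \<in> unit_sphere \<Longrightarrow> y \<in> unit_sphere \<Longrightarrow>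
                min (norm (x + y)) (norm (x - y)) \<le> 2 - \<delta>"
    by (auto simp: uniformly_non_square_def)
  have "1/2 - \<delta>/16 < Sup S" using sup \<delta> by simp
  then obtain z where "z \<in> S" "1/2 - \<delta>/16 < z" using less_cSup_iff[OF nonempty bdd] by blast
  then obtain x y where xy: "x \<in> unit_sphere" "y \<in> unit_sphere" "x \<noteq> y" "x \<noteq> - y"
    and near: "1/2 - \<delta>/16 < F x y" unfolding S_def by blast
  have "2 - \<delta>/2 \<le> norm (x + y)" "2 - \<delta>/2 \<le> norm (x - y)"
    using ge_2_minus_of_angle_quotient_gt[of "norm (x + y)" "norm (x - y)" "\<delta>/16"]
      ge_2_minus_of_angle_quotient_gt[of "norm (x - y)" "norm (x + y)" "\<delta>/16"]
      norms[OF xy] near \<delta> by (auto simp: F_def ac_simps)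
  then show False using uns[OF xy(1,2)] \<delta> by (simp add: min_le_iff_disj)
qed

theorem proposition5p6:
  assumes "dim_ge_2 TYPE('a::banach)"
    and "P_angle_const TYPE('a) = 1/2"
  shows "\<not> uniformly_convex_space TYPE('a) \<and>
         (finite_dim_space TYPE('a) \<longrightarrow> \<not> strictly_convex_space TYPE('a))"
  using P_angle_const_half_imp_not_uniformly_non_square[OF assms]
    uniformly_convex_imp_uniformly_non_square finite_dim_strictly_convex_imp_uniformly_non_square
  by blast

end
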